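(* The following problem is decidable: given a finite alphabet $\mathcal{A}$, a finite set $\mathcal{F}$ of finite patterns on $\mathbb{Z}^d$ and $T\in\mathbb{N}$, does player $A$ have a winning strategy in the game $\Gamma_T^\omega(\mathcal{A},\mathcal{F},\mathbb{Z}^d)$?
   Context: Fix $d\ge1$; use the distance $d(i,j)=\sum_{k=1}^d|i_k-j_k|$ on $\mathbb{Z}^d$, and $d(i,S)=\min_{j\in S}d(i,j)$. A pattern is $p=(S,f)$ with $S\subseteq\mathbb{Z}^d$, $f\in\mathcal{A}^S$; a finite pattern $q=(S',g)$ appears in $p=(S,f)$ if $v+S'\subseteq S$ and $f(v+j)=g(j)$ for all $j\in S'$, for some $v\in\mathbb{Z}^d$. The game $\Gamma_T^\omega(\mathcal{A},\mathcal{F},\mathbb{Z}^d)$: positions are a finite sequence $(p^1,\dots,p^b)$ of finite patterns (boards) together with the player to move; initially the sequence is empty and $A$ moves; players $A$ and $B$ alternate. At turn number $t$ the current player may: pass; add a tile $(i,a)$ ($a\in\mathcal{A}$, $i\notin\operatorname{supp}p^k$) to one existing board $p^k$, provided $d(i,\operatorname{supp}p^k)\le 2^{T-t}$; or open a new board $p^{b+1}=\{(0,a)\}$ for some $a\in\mathcal{A}$. If a pattern of $\mathcal{F}$ appears on some board, the game ends and $A$ wins; if after turn $T$ no such pattern has appeared, $B$ wins. *)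

theory Defs
  imports Main "HOL-Library.Nat_Bijection"
begin

datatype recf = Zero | Succ | Proj nat | Comp recf "recf list" | Prec recf recf | Mn recf

inductive evalr :: "recf \<Rightarrow> nat list \<Rightarrow> nat \<Rightarrow> bool" where
  zero: "evalr Zero xs 0"
| succ: "evalr Succ (x # xs) (Suc x)"
| proj: "i < length xs \<Longrightarrow> evalr (Proj i) xs (xs ! i)"
| comp: "list_all2 (\<lambda>g y. evalr g xs y) gs ys \<Longrightarrow> evalr f ys z \<Longrightarrow> evalr (Comp f gs) xs z"
| prec0: "evalr f xs y \<Longrightarrow> evalr (Prec f g) (0 # xs) y"
| precS: "evalr (Prec f g) (n # xs) y \<Longrightarrow> evalr g (n # y # xs) z \<Longrightarrow> evalr (Prec f g) (Suc n # xs) z"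
| mn: "evalr f (n # xs) 0 \<Longrightarrow> (\<forall>m<n. \<exists>y. evalr f (m # xs) y \<and> y \<noteq> 0) \<Longrightarrow> evalr (Mn f) xs n"

text \<open>Decidability is expressed in the statement via a total recursive decider.\<close>

type_synonym point = "int list"          \<comment> \<open>element of Z^d, as a list of length d\<close>
type_synonym pattern = "point \<rightharpoonup> nat" \<comment> \<open>finite pattern: support = dom, letters = naturals\<close>

definition l1dist :: "point \<Rightarrow> point \<Rightarrow> int" where
  "l1dist i j = sum_list (map (\<lambda>(x, y). \<bar>x - y\<bar>) (zip i j))"

definition setdist :: "point \<Rightarrow> point set \<Rightarrow> int" where
  "setdist i S = Min ((\<lambda>j. l1dist i j) ` S)"

definition vadd :: "point \<Rightarrow> point \<Rightarrow> point" where
  "vadd v j = map2 (+) v j"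

definition appears :: "nat \<Rightarrow> pattern \<Rightarrow> pattern \<Rightarrow> bool" where
  "appears d q p \<longleftrightarrow> (\<exists>v. length v = d \<and> (\<forall>j\<in>dom q. p (vadd v j) = q j))"

definition ended :: "nat \<Rightarrow> pattern set \<Rightarrow> pattern list \<Rightarrow> bool" where
  "ended d F bs \<longleftrightarrow> (\<exists>p\<in>set bs. \<exists>q\<in>F. appears d q p)"

text \<open>Positions reachable by one legal move at turn t (pass / add a tile / open new board).\<close>
definition moves :: "nat \<Rightarrow> nat set \<Rightarrow> nat \<Rightarrow> nat \<Rightarrow> pattern list \<Rightarrow> pattern list set" where
  "moves d Al T t bs =
     {bs}
     \<union> {bs[k := (bs ! k)(i \<mapsto> a)] | k i a. k < length bs \<and> length i = d \<and> i \<notin> dom (bs ! k)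
           \<and> a \<in> Al \<and> setdist i (dom (bs ! k)) \<le> 2 ^ (T - t)}
     \<union> {bs @ [[replicate d 0 \<mapsto> a]] | a. a \<in> Al}"

text \<open>win d Al F T r t bs: before turn t with r turns remaining and boards bs,
  player A can force a win (A moves at odd turns).\<close>
fun win :: "nat \<Rightarrow> nat set \<Rightarrow> pattern set \<Rightarrow> nat \<Rightarrow> nat \<Rightarrow> nat \<Rightarrow> pattern list \<Rightarrow> bool" where
  "win d Al F T 0 t bs = ended d F bs"
| "win d Al F T (Suc r) t bs =
     (ended d F bs \<or>
      (if odd t then (\<exists>bs'\<in>moves d Al T t bs. win d Al F T r (Suc t) bs')
       else (\<forall>bs'\<in>moves d Al T t bs. win d Al F T r (Suc t) bs')))"

definition A_wins :: "nat \<Rightarrow> nat set \<Rightarrow> pattern set \<Rightarrow> nat \<Rightarrow> bool" where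
  "A_wins d Al F T = win d Al F T T 1 []"

definition enc_point :: "point \<Rightarrow> nat" where
  "enc_point xs = list_encode (map int_encode xs)"

definition enc_pattern :: "(point \<times> nat) list \<Rightarrow> nat" where
  "enc_pattern ps = list_encode (map (\<lambda>(i, a). prod_encode (enc_point i, a)) ps)"

definition enc_instance :: "nat \<Rightarrow> nat list \<Rightarrow> (point \<times> nat) list list \<Rightarrow> nat \<Rightarrow> nat" where
  "enc_instance d As Fs T =
     list_encode [d, list_encode As, list_encode (map enc_pattern Fs), T]"

definition valid_instance :: "nat \<Rightarrow> nat list \<Rightarrow> (point \<times> nat) list list \<Rightarrow> bool" where
  "valid_instance d As Fs \<longleftrightarrow>
     (\<forall>ps\<in>set Fs. distinct (map fst ps) \<and> (\<forall>(i, a)\<in>set ps. length i = d \<and> a \<in> set As))"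

end

(*
  Tiles may only be placed within distance 2^(T-t) of a tile already on the same board and
  letters come from a finite alphabet, so every position has finitely many successors, which
  can be listed explicitly.  Hence A_wins is a minimax recursion of depth T over a finitely
  branching tree.  Written with list combinators (folds, maps, bounded iteration) over data
  coded by Cantor pairing, this recursion is a total mu-recursive function of the code of the
  instance.
*)

theory Submission
  imports Defs "HOL-Library.More_List"
begin

section \<open>Partial recursive programs\<close>

inductive_cases evalr_ZeroE: "evalr Zero xs y"
inductive_cases evalr_SuccE: "evalr Succ xs y"
inductive_cases evalr_ProjE: "evalr (Proj i) xs y"
inductive_cases evalr_CompE: "evalr (Comp f gs) xs y"
inductive_cases evalr_Prec0E: "evalr (Prec f g) (0 # xs) y"
inductive_cases evalr_PrecSE: "evalr (Prec f g) (Suc n # xs) y"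
inductive_cases evalr_MnE: "evalr (Mn f) xs y"

lemma evalr_deterministic: "evalr f xs y \<Longrightarrow> evalr f xs z \<Longrightarrow> y = z"
proof (induction arbitrary: z rule: evalr.induct)
  case (zero xs) show ?case using zero.prems by (rule evalr_ZeroE) (use zero in auto)
next
  case (succ x xs) show ?case using succ.prems by (rule evalr_SuccE) (use succ in auto)
next
  case (proj i xs) show ?case using proj.prems by (rule evalr_ProjE) (use proj in auto)
next
  case (comp xs gs ys f z z')
  from comp.prems obtain ys' where args: "list_all2 (\<lambda>g y. evalr g xs y) gs ys'" and "evalr f ys' z'"
    by (auto elim: evalr_CompE)
  have "ys = ys'" using comp.IH(1) args
  proof (induction gs arbitrary: ys ys')
    case Nil then show ?case by auto
  next
    case (Cons g gs)
    then obtain y ysr y' ysr' where "ys = y # ysr" "ys' = y' # ysr'" by (auto simp: list_all2_Cons1)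
    with Cons show ?case by auto
  qed
  then show ?case using comp.IH(2) \<open>evalr f ys' z'\<close> by auto
next
  case (prec0 f xs y g) show ?case using prec0.prems by (rule evalr_Prec0E) (use prec0 in auto)
next
  case (precS f g n xs y z0) show ?case using precS.prems by (rule evalr_PrecSE) (use precS in auto)
next
  case (mn f n xs z)
  from mn.prems have zero: "evalr f (z # xs) 0" and below: "\<forall>m<z. \<exists>y. evalr f (m # xs) y \<and> y \<noteq> 0"
    by (auto elim: evalr_MnE)
  show ?case
  proof (rule ccontr)
    assume "n \<noteq> z"
    then consider "n < z" | "z < n" by linarith
    then show False
    proof cases
      case 1
      then obtain y where "evalr f (n # xs) y" "y \<noteq> 0" using below by auto
      then show False using mn.IH(1) by auto
    next
      case 2
      then obtain y where "y \<noteq> 0" and "\<forall>w. evalr f (z # xs) w \<longrightarrow> y = w" using mn.IH(2) by auto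
      then show False using zero by auto
    qed
  qed
qed

definition computes :: "nat \<Rightarrow> recf \<Rightarrow> (nat list \<Rightarrow> nat) \<Rightarrow> bool" where
  "computes k r F \<longleftrightarrow> (\<forall>xs. length xs = k \<longrightarrow> evalr r xs (F xs))"

lemma computes_Zero: "computes k Zero (\<lambda>_. 0)"
  by (auto simp: computes_def intro: evalr.zero)

lemma computes_Succ: "computes 1 Succ (\<lambda>xs. Suc (xs ! 0))"
  by (auto simp: computes_def length_Suc_conv intro: evalr.succ)

lemma computes_Proj: "i < k \<Longrightarrow> computes k (Proj i) (\<lambda>xs. xs ! i)"
  by (auto simp: computes_def intro: evalr.proj)

lemma computes_Comp:
  assumes "computes m r H" and "list_all2 (\<lambda>g G. computes k g G) gs Gs" and "length Gs = m"
  shows "computes k (Comp r gs) (\<lambda>xs. H (map (\<lambda>G. G xs) Gs))"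
  unfolding computes_def
proof (intro allI impI)
  fix xs :: "nat list" assume "length xs = k"
  then have "list_all2 (\<lambda>g y. evalr g xs y) gs (map (\<lambda>G. G xs) Gs)"
    using assms(2) by (auto simp: list_all2_conv_all_nth computes_def)
  moreover have "evalr r (map (\<lambda>G. G xs) Gs) (H (map (\<lambda>G. G xs) Gs))"
    using assms(1,3) by (auto simp: computes_def)
  ultimately show "evalr (Comp r gs) xs (H (map (\<lambda>G. G xs) Gs))" by (rule evalr.comp)
qed

lemma computes_Comp1:
  "computes 1 r H \<Longrightarrow> computes k g G \<Longrightarrow> computes k (Comp r [g]) (\<lambda>xs. H [G xs])"
  using computes_Comp[where m=1 and gs="[g]" and Gs="[G]"] by auto

lemma computes_Comp2:
  "computes 2 r H \<Longrightarrow> computes k g1 G1 \<Longrightarrow> computes k g2 G2 \<Longrightarrow>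
   computes k (Comp r [g1, g2]) (\<lambda>xs. H [G1 xs, G2 xs])"
  using computes_Comp[where m=2 and gs="[g1, g2]" and Gs="[G1, G2]"] by auto

lemma computes_Comp3:
  "computes 3 r H \<Longrightarrow> computes k g1 G1 \<Longrightarrow> computes k g2 G2 \<Longrightarrow> computes k g3 G3 \<Longrightarrow>
   computes k (Comp r [g1, g2, g3]) (\<lambda>xs. H [G1 xs, G2 xs, G3 xs])"
  using computes_Comp[where m=3 and gs="[g1, g2, g3]" and Gs="[G1, G2, G3]"] by auto

lemma computes_Prec:
  assumes f: "computes k f F" and g: "computes (Suc (Suc k)) g G"
  shows "computes (Suc k) (Prec f g) (\<lambda>xs. rec_nat (F (tl xs)) (\<lambda>n y. G (n # y # tl xs)) (hd xs))"
  unfolding computes_def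
proof (intro allI impI)
  fix xs :: "nat list" assume "length xs = Suc k"
  then obtain n ys where xs: "xs = n # ys" and "length ys = k" by (cases xs) auto
  have "evalr (Prec f g) (n # ys) (rec_nat (F ys) (\<lambda>n y. G (n # y # ys)) n)"
  proof (induction n)
    case 0 then show ?case using f \<open>length ys = k\<close> by (auto simp: computes_def intro: evalr.prec0)
  next
    case (Suc n) then show ?case using g \<open>length ys = k\<close> by (auto simp: computes_def intro: evalr.precS)
  qed
  then show "evalr (Prec f g) xs (rec_nat (F (tl xs)) (\<lambda>n y. G (n # y # tl xs)) (hd xs))"
    using xs by simp
qed

lemma computes_Mn:
  assumes p: "computes (Suc k) p P" and ex: "\<And>xs. length xs = k \<Longrightarrow> \<exists>m. P (m # xs) = 0"
  shows "computes k (Mn p) (\<lambda>xs. LEAST m. P (m # xs) = 0)"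
  unfolding computes_def
proof (intro allI impI)
  fix xs :: "nat list" assume len: "length xs = k"
  let ?n = "LEAST m. P (m # xs) = 0"
  have eval: "evalr p (m # xs) (P (m # xs))" for m using p len by (auto simp: computes_def)
  have "P (?n # xs) = 0" using ex[OF len] by (rule LeastI_ex)
  then have "evalr p (?n # xs) 0" using eval by metis
  moreover have "\<forall>m<?n. \<exists>y. evalr p (m # xs) y \<and> y \<noteq> 0"
    using eval not_less_Least by blast
  ultimately show "evalr (Mn p) xs ?n" by (rule evalr.mn)
qed

lemma computes_cong:
  "computes k r F \<Longrightarrow> k = k' \<Longrightarrow> (\<And>xs. length xs = k \<Longrightarrow> F xs = G xs) \<Longrightarrow> computes k' r G"
  by (auto simp: computes_def)

lemmas length_eq_numeral_simps = length_Suc_conv numeral_2_eq_2 numeral_3_eq_3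

definition r_add :: recf where
  "r_add = Prec (Proj 0) (Comp Succ [Proj 1])"

lemma computes_add: "computes 2 r_add (\<lambda>xs. xs ! 0 + xs ! 1)"
proof -
  have rec: "rec_nat b (\<lambda>n y. Suc y) a = a + b" for a b :: nat by (induction a) auto
  show ?thesis unfolding r_add_def
    by (rule computes_cong[OF computes_Prec[OF computes_Proj[of 0 1]
          computes_Comp1[OF computes_Succ computes_Proj[of 1 "Suc (Suc 1)"]]]])
      (auto simp: length_eq_numeral_simps rec)
qed

definition r_pred :: recf where
  "r_pred = Prec Zero (Proj 0)"

lemma computes_pred: "computes 1 r_pred (\<lambda>xs. xs ! 0 - 1)"
proof -
  have rec: "rec_nat 0 (\<lambda>n y. n) a = a - 1" for a :: nat by (cases a) auto
  show ?thesis unfolding r_pred_def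
    by (rule computes_cong[OF computes_Prec[OF computes_Zero[of 0] computes_Proj[of 0 "Suc (Suc 0)"]]])
      (auto simp: length_eq_numeral_simps rec)
qed

definition r_sub_rev :: recf where
  "r_sub_rev = Prec (Proj 0) (Comp r_pred [Proj 1])"

lemma computes_sub_rev: "computes 2 r_sub_rev (\<lambda>xs. xs ! 1 - xs ! 0)"
proof -
  have rec: "rec_nat b (\<lambda>n y. y - Suc 0) a = b - a" for a b :: nat by (induction a) auto
  show ?thesis unfolding r_sub_rev_def
    by (rule computes_cong[OF computes_Prec[OF computes_Proj[of 0 1]
          computes_Comp1[OF computes_pred computes_Proj[of 1 "Suc (Suc 1)"]]]])
      (auto simp: length_eq_numeral_simps rec)
qed

definition r_sub :: recf where
  "r_sub = Comp r_sub_rev [Proj 1, Proj 0]"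

lemma computes_sub: "computes 2 r_sub (\<lambda>xs. xs ! 0 - xs ! 1)"
  unfolding r_sub_def
  by (rule computes_cong[OF computes_Comp2[OF computes_sub_rev computes_Proj[of 1 2] computes_Proj[of 0 2]]])
    (auto simp: length_eq_numeral_simps)

definition r_if_zero :: recf where
  "r_if_zero = Prec (Proj 1) (Proj 2)"

lemma computes_if_zero: "computes 3 r_if_zero (\<lambda>xs. if xs ! 0 = 0 then xs ! 2 else xs ! 1)"
proof -
  have rec: "rec_nat v (\<lambda>n y. u) c = (if c = 0 then v else u)" for c u v :: nat by (cases c) auto
  show ?thesis unfolding r_if_zero_def
    by (rule computes_cong[OF computes_Prec[OF computes_Proj[of 1 2] computes_Proj[of 2 "Suc (Suc 2)"]]])
      (auto simp: length_eq_numeral_simps rec)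
qed

definition r_triangle :: recf where
  "r_triangle = Prec Zero (Comp r_add [Proj 1, Comp Succ [Proj 0]])"

lemma computes_triangle: "computes 1 r_triangle (\<lambda>xs. triangle (xs ! 0))"
proof -
  have rec: "rec_nat 0 (\<lambda>n y. Suc (y + n)) a = triangle a" for a by (induction a) auto
  show ?thesis unfolding r_triangle_def
    by (rule computes_cong[OF computes_Prec[OF computes_Zero[of 0]
          computes_Comp2[OF computes_add computes_Proj[of 1 "Suc (Suc 0)"]
            computes_Comp1[OF computes_Succ computes_Proj[of 0 "Suc (Suc 0)"]]]]])
      (auto simp: length_eq_numeral_simps rec)
qed

definition r_prod_encode :: recf where
  "r_prod_encode = Comp r_add [Comp r_triangle [Comp r_add [Proj 0, Proj 1]], Proj 0]"

lemma computes_prod_encode: "computes 2 r_prod_encode (\<lambda>xs. prod_encode (xs ! 0, xs ! 1))"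
  unfolding r_prod_encode_def
  by (rule computes_cong[OF computes_Comp2[OF computes_add
        computes_Comp1[OF computes_triangle computes_Comp2[OF computes_add computes_Proj[of 0 2] computes_Proj[of 1 2]]]
        computes_Proj[of 0 2]]])
    (auto simp: length_eq_numeral_simps prod_encode_def)

text \<open>Decoding \<open>k = prod_encode (m, n)\<close> needs the diagonal \<open>m + n\<close>, which is found by unbounded search.\<close>

definition diagonal_index :: "nat \<Rightarrow> nat" where
  "diagonal_index k = (LEAST s. k < triangle (Suc s))"

lemma triangle_mono: "a \<le> b \<Longrightarrow> triangle a \<le> triangle b"
  by (induction b) (auto simp: le_Suc_eq)

lemma prod_decode_diagonal_index:
  "prod_decode k = (k - triangle (diagonal_index k), diagonal_index k - (k - triangle (diagonal_index k)))"
proof -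
  obtain m n where mn: "prod_decode k = (m, n)" by (cases "prod_decode k")
  then have k: "k = triangle (m + n) + m"
    using prod_decode_inverse[of k] by (simp add: prod_encode_def)
  have "diagonal_index k = m + n" unfolding diagonal_index_def
  proof (rule Least_equality)
    show "k < triangle (Suc (m + n))" using k by simp
  next
    fix s assume "k < triangle (Suc s)"
    then show "m + n \<le> s" using k triangle_mono[of "Suc s" "m + n"] by fastforce
  qed
  then show ?thesis using mn k by simp
qed

definition r_diagonal_index :: recf where
  "r_diagonal_index = Mn (Comp r_sub [Comp Succ [Proj 1], Comp r_triangle [Comp Succ [Proj 0]]])"

lemma computes_diagonal_index: "computes 1 r_diagonal_index (\<lambda>xs. diagonal_index (xs ! 0))"
proof -
  have "computes (Suc 1) (Comp r_sub [Comp Succ [Proj 1], Comp r_triangle [Comp Succ [Proj 0]]])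
      (\<lambda>xs. Suc (xs ! 1) - triangle (Suc (xs ! 0)))"
    by (rule computes_cong[OF computes_Comp2[OF computes_sub
          computes_Comp1[OF computes_Succ computes_Proj[of 1 2]]
          computes_Comp1[OF computes_triangle computes_Comp1[OF computes_Succ computes_Proj[of 0 2]]]]])
      (auto simp: length_eq_numeral_simps)
  moreover have "\<exists>m. n \<le> triangle m + m" for n by (intro exI[of _ n]) simp
  ultimately show ?thesis unfolding r_diagonal_index_def diagonal_index_def
    by (elim computes_cong[OF computes_Mn]) (auto simp: less_Suc_eq_le)
qed

definition r_prod_fst :: recf where
  "r_prod_fst = Comp r_sub [Proj 0, Comp r_triangle [r_diagonal_index]]"

lemma computes_prod_fst: "computes 1 r_prod_fst (\<lambda>xs. fst (prod_decode (xs ! 0)))"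
  unfolding r_prod_fst_def
  by (rule computes_cong[OF computes_Comp2[OF computes_sub computes_Proj[of 0 1]
        computes_Comp1[OF computes_triangle computes_diagonal_index]]])
    (auto simp: length_eq_numeral_simps prod_decode_diagonal_index)

definition r_prod_snd :: recf where
  "r_prod_snd = Comp r_sub [r_diagonal_index, r_prod_fst]"

lemma computes_prod_snd: "computes 1 r_prod_snd (\<lambda>xs. snd (prod_decode (xs ! 0)))"
  unfolding r_prod_snd_def
  by (rule computes_cong[OF computes_Comp2[OF computes_sub computes_diagonal_index computes_prod_fst]])
    (auto simp: length_eq_numeral_simps prod_decode_diagonal_index)

definition r_half :: recf where
  "r_half = Mn (Comp r_sub [Comp Succ [Proj 1], Comp r_add [Comp Succ [Proj 0], Comp Succ [Proj 0]]])"

lemma computes_half: "computes 1 r_half (\<lambda>xs. xs ! 0 div 2)"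
proof -
  have "computes (Suc 1) (Comp r_sub [Comp Succ [Proj 1], Comp r_add [Comp Succ [Proj 0], Comp Succ [Proj 0]]])
      (\<lambda>xs. Suc (xs ! 1) - (Suc (xs ! 0) + Suc (xs ! 0)))"
    by (rule computes_cong[OF computes_Comp2[OF computes_sub
          computes_Comp1[OF computes_Succ computes_Proj[of 1 2]]
          computes_Comp2[OF computes_add computes_Comp1[OF computes_Succ computes_Proj[of 0 2]]
            computes_Comp1[OF computes_Succ computes_Proj[of 0 2]]]]])
      (auto simp: length_eq_numeral_simps)
  moreover have "(LEAST m. Suc n - (Suc m + Suc m) = 0) = n div 2" for n :: nat
    by (rule Least_equality) (simp, linarith)
  moreover have "\<exists>m. n \<le> Suc (m + m)" for n by (intro exI[of _ n]) simp
  ultimately show ?thesis unfolding r_half_def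
    by (elim computes_cong[OF computes_Mn]) auto
qed

definition r_funpow :: "recf \<Rightarrow> recf" where
  "r_funpow r = Prec (Proj 0) (Comp r [Proj 1])"

lemma computes_funpow:
  assumes "computes 1 r (\<lambda>xs. S (xs ! 0))"
  shows "computes 2 (r_funpow r) (\<lambda>xs. (S ^^ (xs ! 0)) (xs ! 1))"
proof -
  have rec: "rec_nat x (\<lambda>n y. S y) k = (S ^^ k) x" for k x by (induction k) auto
  show ?thesis unfolding r_funpow_def
    by (rule computes_cong[OF computes_Prec[OF computes_Proj[of 0 1]
          computes_Comp1[OF assms computes_Proj[of 1 "Suc (Suc 1)"]]]])
      (auto simp: length_eq_numeral_simps rec)
qed

definition nat_computable :: "(nat \<Rightarrow> nat) \<Rightarrow> bool" where
  "nat_computable F \<longleftrightarrow> (\<exists>r. computes 1 r (\<lambda>xs. F (xs ! 0)))"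

lemma nat_computable_Comp1:
  "computes 1 r H \<Longrightarrow> nat_computable F \<Longrightarrow> nat_computable (\<lambda>n. H [F n])"
  unfolding nat_computable_def using computes_Comp1 by fastforce

lemma nat_computable_Comp2:
  "computes 2 r H \<Longrightarrow> nat_computable F \<Longrightarrow> nat_computable G \<Longrightarrow> nat_computable (\<lambda>n. H [F n, G n])"
  unfolding nat_computable_def using computes_Comp2 by fastforce

lemma nat_computable_Comp3:
  "computes 3 r H \<Longrightarrow> nat_computable F \<Longrightarrow> nat_computable G \<Longrightarrow> nat_computable K \<Longrightarrow>
   nat_computable (\<lambda>n. H [F n, G n, K n])"
  unfolding nat_computable_def using computes_Comp3 by fastforce

lemma nat_computable_ident: "nat_computable (\<lambda>n. n)"
  unfolding nat_computable_def using computes_Proj[of 0 1] by auto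

lemma nat_computable_const: "nat_computable (\<lambda>n. c)"
proof (induction c)
  case 0 show ?case unfolding nat_computable_def using computes_Zero by auto
next
  case (Suc c) then show ?case using nat_computable_Comp1[OF computes_Succ, of "\<lambda>n. c"] by simp
qed

lemma nat_computable_comp: "nat_computable F \<Longrightarrow> nat_computable G \<Longrightarrow> nat_computable (\<lambda>n. F (G n))"
  using nat_computable_Comp1[of _ "\<lambda>xs. F (xs ! 0)" G] unfolding nat_computable_def by auto

lemma nat_computable_add: "nat_computable F \<Longrightarrow> nat_computable G \<Longrightarrow> nat_computable (\<lambda>n. F n + G n)"
  using nat_computable_Comp2[OF computes_add, of F G] by simp

lemma nat_computable_sub: "nat_computable F \<Longrightarrow> nat_computable G \<Longrightarrow> nat_computable (\<lambda>n. F n - G n)"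
  using nat_computable_Comp2[OF computes_sub, of F G] by simp

lemma nat_computable_prod_encode:
  "nat_computable F \<Longrightarrow> nat_computable G \<Longrightarrow> nat_computable (\<lambda>n. prod_encode (F n, G n))"
  using nat_computable_Comp2[OF computes_prod_encode, of F G] by simp

lemma nat_computable_prod_fst: "nat_computable F \<Longrightarrow> nat_computable (\<lambda>n. fst (prod_decode (F n)))"
  using nat_computable_Comp1[OF computes_prod_fst, of F] by simp

lemma nat_computable_prod_snd: "nat_computable F \<Longrightarrow> nat_computable (\<lambda>n. snd (prod_decode (F n)))"
  using nat_computable_Comp1[OF computes_prod_snd, of F] by simp

lemma nat_computable_half: "nat_computable F \<Longrightarrow> nat_computable (\<lambda>n. F n div 2)"
  using nat_computable_Comp1[OF computes_half, of F] by simp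

lemma nat_computable_Suc: "nat_computable F \<Longrightarrow> nat_computable (\<lambda>n. Suc (F n))"
  using nat_computable_Comp1[OF computes_Succ, of F] by simp

lemma nat_computable_if_zero:
  "nat_computable C \<Longrightarrow> nat_computable F \<Longrightarrow> nat_computable G \<Longrightarrow>
   nat_computable (\<lambda>n. if C n = 0 then G n else F n)"
  using nat_computable_Comp3[OF computes_if_zero, of C F G] by (simp add: numeral_2_eq_2 cong: if_cong)

lemma nat_computable_funpow:
  assumes "nat_computable S" "nat_computable K" "nat_computable X"
  shows "nat_computable (\<lambda>n. (S ^^ K n) (X n))"
proof -
  obtain r where "computes 1 r (\<lambda>xs. S (xs ! 0))" using assms(1) unfolding nat_computable_def by auto
  from nat_computable_Comp2[OF computes_funpow[OF this] assms(2,3)] show ?thesis by simp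
qed

section \<open>Computable functions between encodable types\<close>

class encodable =
  fixes enc :: "'a \<Rightarrow> nat"
  assumes inj_enc: "inj enc"

instantiation nat :: encodable begin
definition enc_nat :: "nat \<Rightarrow> nat" where "enc_nat n = n"
instance by standard (simp add: enc_nat_def inj_on_def)
end

instantiation bool :: encodable begin
definition enc_bool :: "bool \<Rightarrow> nat" where "enc_bool b = (if b then 1 else 0)"
instance by standard (simp add: enc_bool_def inj_on_def)
end

instantiation int :: encodable begin
definition enc_int :: "int \<Rightarrow> nat" where "enc_int = int_encode"
instance by standard (simp add: enc_int_def inj_int_encode)
end

instantiation prod :: (encodable, encodable) encodable begin
definition enc_prod :: "'a \<times> 'b \<Rightarrow> nat" where "enc_prod p = prod_encode (enc (fst p), enc (snd p))"
instance by standard (auto simp: enc_prod_def inj_on_def dest: injD[OF inj_enc])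
end

instantiation list :: (encodable) encodable begin
definition enc_list :: "'a list \<Rightarrow> nat" where "enc_list xs = list_encode (map enc xs)"
instance by standard (auto simp: enc_list_def inj_on_def list_encode_eq inj_map_eq_map[OF inj_enc])
end

lemma enc_eq_iff [simp]: "enc x = enc y \<longleftrightarrow> x = y"
  using inj_enc by (auto dest: injD)

lemma enc_Pair: "enc (a, b) = prod_encode (enc a, enc b)"
  by (simp add: enc_prod_def)

lemma enc_Nil: "enc [] = 0"
  by (simp add: enc_list_def)

lemma enc_Cons: "enc (x # xs) = Suc (prod_encode (enc x, enc xs))"
  by (simp add: enc_list_def)

lemma enc_nat_id [simp]: "enc (n :: nat) = n"
  by (simp add: enc_nat_def)

lemma length_le_enc: "length xs \<le> enc xs"
proof (induction xs)
  case Nil then show ?case by simp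
next
  case (Cons x xs)
  then show ?case using le_prod_encode_2[of "enc xs" "enc x"] by (simp add: enc_Cons)
qed

lemma surj_enc_nat: "surj (enc :: nat \<Rightarrow> nat)"
  by (metis enc_nat_id surjI)

lemma surj_enc_int: "surj (enc :: int \<Rightarrow> nat)"
  unfolding enc_int_def by (rule surj_int_encode)

lemma surj_enc_prod:
  assumes "surj (enc :: 'a::encodable \<Rightarrow> nat)" "surj (enc :: 'b::encodable \<Rightarrow> nat)"
  shows "surj (enc :: 'a \<times> 'b \<Rightarrow> nat)"
proof (rule surjI)
  fix n :: nat
  show "enc (inv (enc :: 'a \<Rightarrow> nat) (fst (prod_decode n)), inv (enc :: 'b \<Rightarrow> nat) (snd (prod_decode n))) = n"
    using prod_decode_inverse[of n] assms by (simp add: enc_Pair surj_f_inv_f)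
qed

lemma surj_enc_list:
  assumes "surj (enc :: 'a::encodable \<Rightarrow> nat)"
  shows "surj (enc :: 'a list \<Rightarrow> nat)"
proof (rule surjI)
  fix n :: nat
  have "map enc (map (inv (enc :: 'a \<Rightarrow> nat)) (list_decode n)) = list_decode n"
    using assms by (simp add: surj_f_inv_f map_idI)
  then show "enc (map (inv (enc :: 'a \<Rightarrow> nat)) (list_decode n)) = n"
    unfolding enc_list_def by simp
qed

definition computable :: "('a::encodable \<Rightarrow> 'b::encodable) \<Rightarrow> bool" where
  "computable f \<longleftrightarrow> (\<exists>F. nat_computable F \<and> (\<forall>x. F (enc x) = enc (f x)))"

named_theorems computable_intros

lemma computable_ident [computable_intros]: "computable (\<lambda>x. x)"
  unfolding computable_def using nat_computable_ident by auto

lemma computable_const [computable_intros]: "computable (\<lambda>x. c)"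
  unfolding computable_def using nat_computable_const by auto

lemma computable_comp: "computable f \<Longrightarrow> computable g \<Longrightarrow> computable (\<lambda>x. f (g x))"
  unfolding computable_def using nat_computable_comp by fastforce

lemma computable_Pair [computable_intros]:
  "computable f \<Longrightarrow> computable g \<Longrightarrow> computable (\<lambda>x. (f x, g x))"
  unfolding computable_def
proof (elim exE conjE)
  fix F G assume "nat_computable F" "\<forall>x. F (enc x) = enc (f x)" "nat_computable G" "\<forall>x. G (enc x) = enc (g x)"
  then show "\<exists>H. nat_computable H \<and> (\<forall>x. H (enc x) = enc (f x, g x))"
    by (intro exI[of _ "\<lambda>n. prod_encode (F n, G n)"]) (simp add: nat_computable_prod_encode enc_Pair)
qed

lemma computable_fst [computable_intros]: "computable f \<Longrightarrow> computable (\<lambda>x. fst (f x))"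
  unfolding computable_def
proof (elim exE conjE)
  fix F assume "nat_computable F" "\<forall>x. F (enc x) = enc (f x)"
  then show "\<exists>H. nat_computable H \<and> (\<forall>x. H (enc x) = enc (fst (f x)))"
    by (intro exI[of _ "\<lambda>n. fst (prod_decode (F n))"]) (simp add: nat_computable_prod_fst enc_prod_def)
qed

lemma computable_snd [computable_intros]: "computable f \<Longrightarrow> computable (\<lambda>x. snd (f x))"
  unfolding computable_def
proof (elim exE conjE)
  fix F assume "nat_computable F" "\<forall>x. F (enc x) = enc (f x)"
  then show "\<exists>H. nat_computable H \<and> (\<forall>x. H (enc x) = enc (snd (f x)))"
    by (intro exI[of _ "\<lambda>n. snd (prod_decode (F n))"]) (simp add: nat_computable_prod_snd enc_prod_def)
qed

lemma computable_case_prod [computable_intros]: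
  "computable (\<lambda>x. h x (fst (f x)) (snd (f x))) \<Longrightarrow> computable (\<lambda>x. case f x of (a, b) \<Rightarrow> h x a b)"
  by (simp add: case_prod_beta)

lemma computable_enc [computable_intros]: "computable f \<Longrightarrow> computable (\<lambda>x. enc (f x))"
  unfolding computable_def by simp

lemma computable_inv_enc:
  "surj (enc :: 'a::encodable \<Rightarrow> nat) \<Longrightarrow> computable f \<Longrightarrow> computable (\<lambda>x. (inv enc (f x) :: 'a))"
  unfolding computable_def by (simp add: surj_f_inv_f)

lemma computable_int_decode [computable_intros]: "computable f \<Longrightarrow> computable (\<lambda>x. int_decode (f x))"
  unfolding computable_def by (simp add: enc_int_def)

lemma computable_nat_op1:
  assumes "\<And>F. nat_computable F \<Longrightarrow> nat_computable (\<lambda>n. H (F n))" and "computable f"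
  shows "computable (\<lambda>x. H (f x))"
  using assms(2) unfolding computable_def
proof (elim exE conjE)
  fix F assume "nat_computable F" "\<forall>x. F (enc x) = enc (f x)"
  then show "\<exists>K. nat_computable K \<and> (\<forall>x. K (enc x) = enc (H (f x)))"
    by (intro exI[of _ "\<lambda>n. H (F n)"]) (simp add: assms(1))
qed

lemma computable_nat_op2:
  assumes "\<And>F G. nat_computable F \<Longrightarrow> nat_computable G \<Longrightarrow> nat_computable (\<lambda>n. H (F n) (G n))"
    and "computable f" "computable g"
  shows "computable (\<lambda>x. H (f x) (g x))"
  using assms(2,3) unfolding computable_def
proof (elim exE conjE)
  fix F G assume "nat_computable F" "\<forall>x. F (enc x) = enc (f x)" "nat_computable G" "\<forall>x. G (enc x) = enc (g x)"
  then show "\<exists>K. nat_computable K \<and> (\<forall>x. K (enc x) = enc (H (f x) (g x)))"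
    by (intro exI[of _ "\<lambda>n. H (F n) (G n)"]) (simp add: assms(1))
qed

lemma computable_add [computable_intros]: "computable f \<Longrightarrow> computable g \<Longrightarrow> computable (\<lambda>x. (f x :: nat) + g x)"
  by (rule computable_nat_op2[OF nat_computable_add])

lemma computable_diff [computable_intros]: "computable f \<Longrightarrow> computable g \<Longrightarrow> computable (\<lambda>x. (f x :: nat) - g x)"
  by (rule computable_nat_op2[OF nat_computable_sub])

lemma computable_half [computable_intros]: "computable f \<Longrightarrow> computable (\<lambda>x. (f x :: nat) div 2)"
  by (rule computable_nat_op1[OF nat_computable_half])

lemma computable_Suc [computable_intros]: "computable f \<Longrightarrow> computable (\<lambda>x. Suc (f x))"
  by (rule computable_nat_op1[OF nat_computable_Suc])

lemma computable_If [computable_intros]: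
  "computable b \<Longrightarrow> computable f \<Longrightarrow> computable g \<Longrightarrow> computable (\<lambda>x. if b x then f x else g x)"
  unfolding computable_def
proof (elim exE conjE)
  fix B F G assume "nat_computable B" "\<forall>x. B (enc x) = enc (b x)" "nat_computable F" "\<forall>x. F (enc x) = enc (f x)"
     "nat_computable G" "\<forall>x. G (enc x) = enc (g x)"
  then show "\<exists>K. nat_computable K \<and> (\<forall>x. K (enc x) = enc (if b x then f x else g x))"
    by (intro exI[of _ "\<lambda>n. if B n = 0 then G n else F n"]) (simp add: nat_computable_if_zero enc_bool_def)
qed

lemma computable_eq [computable_intros]: "computable f \<Longrightarrow> computable g \<Longrightarrow> computable (\<lambda>x. f x = g x)"
  unfolding computable_def
proof (elim exE conjE)
  fix F G assume "nat_computable F" "\<forall>x. F (enc x) = enc (f x)" "nat_computable G" "\<forall>x. G (enc x) = enc (g x)"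
  then show "\<exists>K. nat_computable K \<and> (\<forall>x. K (enc x) = enc (f x = g x))"
    using nat_computable_if_zero[OF nat_computable_add[OF nat_computable_sub nat_computable_sub]
        nat_computable_const nat_computable_const, of F G G F 1 0]
    by (intro exI[of _ "\<lambda>n. if (F n - G n) + (G n - F n) = 0 then 1 else 0"]) (auto simp: enc_bool_def)
qed

lemma computable_le [computable_intros]: "computable f \<Longrightarrow> computable g \<Longrightarrow> computable (\<lambda>x. (f x :: nat) \<le> g x)"
  unfolding computable_def
proof (elim exE conjE)
  fix F G assume "nat_computable F" "\<forall>x. F (enc x) = enc (f x)" "nat_computable G" "\<forall>x. G (enc x) = enc (g x)"
  then show "\<exists>K. nat_computable K \<and> (\<forall>x. K (enc x) = enc (f x \<le> g x))"
    using nat_computable_if_zero[OF nat_computable_sub nat_computable_const nat_computable_const, of F G 1 0]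
    by (intro exI[of _ "\<lambda>n. if F n - G n = 0 then 1 else 0"]) (auto simp: enc_bool_def)
qed

lemma computable_less [computable_intros]: "computable f \<Longrightarrow> computable g \<Longrightarrow> computable (\<lambda>x. (f x :: nat) < g x)"
  using computable_le[of "\<lambda>x. Suc (f x)" g] computable_Suc[of f] by (simp add: Suc_le_eq)

lemma computable_Not [computable_intros]:
  assumes "computable P" shows "computable (\<lambda>x. \<not> P x)"
proof -
  have "(\<lambda>x. \<not> P x) = (\<lambda>x. if P x then False else True)" by auto
  then show ?thesis by (simp only:) (intro computable_If computable_const assms)
qed

lemma computable_conj [computable_intros]:
  assumes "computable P" "computable Q" shows "computable (\<lambda>x. P x \<and> Q x)"
proof -
  have "(\<lambda>x. P x \<and> Q x) = (\<lambda>x. if P x then Q x else False)" by auto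
  then show ?thesis by (simp only:) (intro computable_If computable_const assms)
qed

lemma computable_disj [computable_intros]:
  assumes "computable P" "computable Q" shows "computable (\<lambda>x. P x \<or> Q x)"
proof -
  have "(\<lambda>x. P x \<or> Q x) = (\<lambda>x. if P x then True else Q x)" by auto
  then show ?thesis by (simp only:) (intro computable_If computable_const assms)
qed

lemma computable_funpow [computable_intros]:
  fixes s :: "'a::encodable \<Rightarrow> 'b::encodable \<Rightarrow> 'b"
  assumes "computable (\<lambda>p. s (fst p) (snd p))" "computable k" "computable x0"
  shows "computable (\<lambda>x. (s x ^^ k x) (x0 x))"
  using assms unfolding computable_def
proof (elim exE conjE)
  fix S K X assume S: "nat_computable S" "\<forall>x. S (enc x) = enc (s (fst x) (snd x))"
    and K: "nat_computable K" "\<forall>x. K (enc x) = enc (k x)"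
    and X: "nat_computable X" "\<forall>x. X (enc x) = enc (x0 x)"
  let ?S = "\<lambda>m. prod_encode (fst (prod_decode m), S m)"
  have iter: "(?S ^^ j) (enc (x, st)) = enc (x, (s x ^^ j) st)" for x st j
    using S(2) by (induction j) (simp_all add: enc_Pair)
  have "nat_computable (\<lambda>n. snd (prod_decode ((?S ^^ K n) (prod_encode (n, X n)))))"
    by (intro nat_computable_prod_snd nat_computable_funpow nat_computable_prod_encode
        nat_computable_prod_fst nat_computable_ident S(1) K(1) X(1))
  moreover have "snd (prod_decode ((?S ^^ K (enc x)) (prod_encode (enc x, X (enc x)))))
      = enc ((s x ^^ k x) (x0 x))" for x
    using iter[where x=x and st="x0 x" and j="k x"] K(2) X(2) by (simp add: enc_Pair)
  ultimately show "\<exists>H. nat_computable H \<and> (\<forall>x. H (enc x) = enc ((s x ^^ k x) (x0 x)))" by blast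
qed

lemma computable_app2:
  "computable (\<lambda>p. h (fst p) (snd p)) \<Longrightarrow> computable e1 \<Longrightarrow> computable e2 \<Longrightarrow>
   computable (\<lambda>x. h (e1 x) (e2 x))"
  by (drule computable_comp[OF _ computable_Pair]) simp_all

lemma computable_app3:
  "computable (\<lambda>p. h (fst p) (fst (snd p)) (snd (snd p))) \<Longrightarrow> computable e1 \<Longrightarrow> computable e2 \<Longrightarrow>
   computable e3 \<Longrightarrow> computable (\<lambda>x. h (e1 x) (e2 x) (e3 x))"
  by (drule computable_comp[OF _ computable_Pair[OF _ computable_Pair]]) simp_all

lemma computable_Cons [computable_intros]:
  "computable f \<Longrightarrow> computable g \<Longrightarrow> computable (\<lambda>x. f x # g x)"
  unfolding computable_def
proof (elim exE conjE)
  fix F G assume "nat_computable F" "\<forall>x. F (enc x) = enc (f x)" "nat_computable G" "\<forall>x. G (enc x) = enc (g x)"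
  then show "\<exists>H. nat_computable H \<and> (\<forall>x. H (enc x) = enc (f x # g x))"
    by (intro exI[of _ "\<lambda>n. Suc (prod_encode (F n, G n))"])
      (simp add: nat_computable_prod_encode nat_computable_Suc enc_Cons)
qed

lemma computable_case_list [computable_intros]:
  assumes "computable l" "computable a" "computable (\<lambda>p. b (fst p) (fst (snd p)) (snd (snd p)))"
  shows "computable (\<lambda>x. case l x of [] \<Rightarrow> a x | y # ys \<Rightarrow> b x y ys)"
  using assms unfolding computable_def
proof (elim exE conjE)
  fix L A B assume L: "nat_computable L" "\<forall>x. L (enc x) = enc (l x)"
    and A: "nat_computable A" "\<forall>x. A (enc x) = enc (a x)"
    and B: "nat_computable B" "\<forall>x. B (enc x) = enc (b (fst x) (fst (snd x)) (snd (snd x)))"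
  have "nat_computable (\<lambda>n. if L n = 0 then A n else B (prod_encode (n, L n - 1)))"
    by (intro nat_computable_if_zero nat_computable_comp[OF B(1)] nat_computable_prod_encode
        nat_computable_ident nat_computable_sub L(1) A(1) nat_computable_const)
  moreover have "(if L (enc x) = 0 then A (enc x) else B (prod_encode (enc x, L (enc x) - 1)))
      = enc (case l x of [] \<Rightarrow> a x | y # ys \<Rightarrow> b x y ys)" for x
  proof (cases "l x")
    case Nil then show ?thesis using L A by (simp add: enc_Nil)
  next
    case (Cons y ys)
    have "B (enc (x, y, ys)) = enc (b x y ys)" using B(2) by simp
    then show ?thesis using L A Cons by (simp add: enc_Cons enc_Pair)
  qed
  ultimately show "\<exists>K. nat_computable K \<and> (\<forall>x. K (enc x) = enc (case l x of [] \<Rightarrow> a x | y # ys \<Rightarrow> b x y ys))"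
    by blast
qed

definition foldl_step :: "('b \<Rightarrow> 'a \<Rightarrow> 'b) \<Rightarrow> 'a list \<times> 'b \<Rightarrow> 'a list \<times> 'b" where
  "foldl_step h st = (case st of (rest, acc) \<Rightarrow> (case rest of [] \<Rightarrow> ([], acc) | y # ys \<Rightarrow> (ys, h acc y)))"

lemma funpow_foldl_step: "length l \<le> n \<Longrightarrow> (foldl_step h ^^ n) (l, acc) = ([], foldl h acc l)"
proof (induction l arbitrary: n acc)
  case Nil
  have "(foldl_step h ^^ n) ([], acc) = ([], acc)" by (induction n) (auto simp: foldl_step_def)
  then show ?case by simp
next
  case (Cons y ys)
  then obtain m where "n = Suc m" and "length ys \<le> m" by (cases n) auto
  then show ?case using Cons.IH by (simp add: funpow_Suc_right foldl_step_def del: funpow.simps)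
qed

text \<open>Since \<open>length xs \<le> enc xs\<close>, iterating a single folding step \<open>enc xs\<close> times runs through the list.\<close>

lemma computable_foldl [computable_intros]:
  fixes h :: "'e::encodable \<Rightarrow> 'b::encodable \<Rightarrow> 'a::encodable \<Rightarrow> 'b"
  assumes h: "computable (\<lambda>p. h (fst p) (fst (snd p)) (snd (snd p)))"
    and "computable a" "computable xs"
  shows "computable (\<lambda>x. foldl (h x) (a x) (xs x))"
proof -
  have "computable (\<lambda>x. snd ((foldl_step (h x) ^^ enc (xs x)) (xs x, a x)))"
    unfolding foldl_step_def by (intro computable_intros computable_app3[OF h] assms(2,3))
  then show ?thesis by (simp add: funpow_foldl_step length_le_enc)
qed

lemma computable_rev [computable_intros]: "computable xs \<Longrightarrow> computable (\<lambda>x. rev (xs x))"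
proof -
  assume "computable xs"
  then have "computable (\<lambda>x. foldl (\<lambda>acc y. y # acc) [] (xs x))" by (intro computable_intros)
  then show ?thesis by (simp add: foldl_conv_fold fold_Cons_rev)
qed

lemma computable_append [computable_intros]:
  "computable xs \<Longrightarrow> computable ys \<Longrightarrow> computable (\<lambda>x. xs x @ ys x)"
proof -
  assume "computable xs" "computable ys"
  then have "computable (\<lambda>x. foldl (\<lambda>acc y. y # acc) (ys x) (rev (xs x)))" by (intro computable_intros)
  then show ?thesis by (simp add: foldl_conv_fold fold_Cons_rev)
qed

lemma computable_map [computable_intros]:
  fixes f :: "'e::encodable \<Rightarrow> 'a::encodable \<Rightarrow> 'b::encodable"
  assumes f: "computable (\<lambda>p. f (fst p) (snd p))" and xs: "computable xs"
  shows "computable (\<lambda>x. map (f x) (xs x))"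
proof -
  have eq: "foldl (\<lambda>acc y. g y # acc) acc0 l = rev (map g l) @ acc0" for g :: "'a \<Rightarrow> 'b" and acc0 l
    by (induction l arbitrary: acc0) auto
  have "computable (\<lambda>x. rev (foldl (\<lambda>acc y. f x y # acc) [] (xs x)))"
    by (intro computable_intros computable_app2[OF f] xs)
  then show ?thesis by (simp add: eq)
qed

lemma computable_concat [computable_intros]:
  assumes "computable xss" shows "computable (\<lambda>x. concat (xss x))"
proof -
  have eq: "foldl (\<lambda>acc ys. acc @ ys) acc0 l = acc0 @ concat l" for acc0 l
    by (induction l arbitrary: acc0) auto
  have "computable (\<lambda>x. foldl (\<lambda>acc ys. acc @ ys) [] (xss x))" by (intro computable_intros assms)
  then show ?thesis by (simp add: eq)
qed

lemma computable_Bex_set [computable_intros]: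
  fixes P :: "'e::encodable \<Rightarrow> 'a::encodable \<Rightarrow> bool"
  assumes P: "computable (\<lambda>p. P (fst p) (snd p))" and xs: "computable xs"
  shows "computable (\<lambda>x. \<exists>y\<in>set (xs x). P x y)"
proof -
  have eq: "foldl (\<lambda>b y. b \<or> Q y) b0 l = (b0 \<or> (\<exists>y\<in>set l. Q y))" for Q b0 l
    by (induction l arbitrary: b0) auto
  have "computable (\<lambda>x. foldl (\<lambda>b y. b \<or> P x y) False (xs x))"
    by (intro computable_intros computable_app2[OF P] xs)
  then show ?thesis by (simp add: eq)
qed

lemma computable_Ball_set [computable_intros]:
  fixes P :: "'e::encodable \<Rightarrow> 'a::encodable \<Rightarrow> bool"
  assumes P: "computable (\<lambda>p. P (fst p) (snd p))" and xs: "computable xs"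
  shows "computable (\<lambda>x. \<forall>y\<in>set (xs x). P x y)"
proof -
  have eq: "foldl (\<lambda>b y. b \<and> Q y) b0 l = (b0 \<and> (\<forall>y\<in>set l. Q y))" for Q b0 l
    by (induction l arbitrary: b0) auto
  have "computable (\<lambda>x. foldl (\<lambda>b y. b \<and> P x y) True (xs x))"
    by (intro computable_intros computable_app2[OF P] xs)
  then show ?thesis by (simp add: eq)
qed

lemma computable_member [computable_intros]:
  assumes y: "computable y" and xs: "computable xs"
  shows "computable (\<lambda>x. y x \<in> set (xs x))"
proof -
  have "computable (\<lambda>x. \<exists>z\<in>set (xs x). z = y x)"
    by (intro computable_intros computable_comp[OF y] xs)
  then show ?thesis by simp
qed

lemma computable_length [computable_intros]:
  assumes "computable xs" shows "computable (\<lambda>x. length (xs x))"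
proof -
  have eq: "foldl (\<lambda>n y. Suc n) n0 l = n0 + length l" for n0 l
    by (induction l arbitrary: n0) auto
  have "computable (\<lambda>x. foldl (\<lambda>n y. Suc n) 0 (xs x))" by (intro computable_intros assms)
  then show ?thesis by (simp add: eq)
qed

lemma computable_sum_list [computable_intros]:
  assumes "computable xs" shows "computable (\<lambda>x. sum_list (xs x :: nat list))"
proof -
  have eq: "foldl (+) n0 l = n0 + sum_list l" for n0 :: nat and l
    by (induction l arbitrary: n0) auto
  have "computable (\<lambda>x. foldl (+) 0 (xs x))" by (intro computable_intros assms)
  then show ?thesis by (simp add: eq)
qed

lemma computable_tl [computable_intros]:
  assumes "computable xs" shows "computable (\<lambda>x. tl (xs x))"
proof -
  have "computable (\<lambda>x. case xs x of [] \<Rightarrow> [] | y # ys \<Rightarrow> ys)" by (intro computable_intros assms)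
  then show ?thesis by (simp add: tl_def)
qed

lemma computable_drop [computable_intros]:
  assumes "computable k" "computable xs" shows "computable (\<lambda>x. drop (k x) (xs x))"
proof -
  have eq: "drop n l = (tl ^^ n) l" for n l
    by (induction n arbitrary: l) (auto simp: drop_Suc funpow_Suc_right simp del: funpow.simps)
  have "computable (\<lambda>x. (tl ^^ k x) (xs x))" by (intro computable_intros assms)
  then show ?thesis by (simp add: eq)
qed

lemma computable_take [computable_intros]:
  assumes "computable k" "computable xs" shows "computable (\<lambda>x. take (k x) (xs x))"
proof -
  have eq: "take (length l - (length l - n)) l = take n l" for n l
    by (cases "n \<le> length l") auto
  have "computable (\<lambda>x. rev (drop (length (xs x) - k x) (rev (xs x))))" by (intro computable_intros assms)
  then show ?thesis by (simp add: rev_drop eq)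
qed

lemma computable_replicate [computable_intros]:
  assumes n: "computable n" and a: "computable a"
  shows "computable (\<lambda>x. replicate (n x) (a x))"
proof -
  have eq: "((\<lambda>l. c # l) ^^ k) [] = replicate k c" for c k
    by (induction k) auto
  have "computable (\<lambda>x. ((\<lambda>l. a x # l) ^^ n x) [])"
    by (intro computable_intros n a computable_comp[OF a])
  then show ?thesis by (simp add: eq)
qed

lemma computable_upt [computable_intros]:
  assumes "computable n" shows "computable (\<lambda>x. [0..<n x])"
proof -
  have eq: "((\<lambda>l. length l # l) ^^ k) [] = rev [0..<k]" for k
    by (induction k) auto
  have "computable (\<lambda>x. rev (((\<lambda>l. length l # l) ^^ n x) []))" by (intro computable_intros assms)
  then show ?thesis by (simp add: eq)
qed

lemma computable_list_update [computable_intros]: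
  assumes "computable xs" "computable k" "computable y"
  shows "computable (\<lambda>x. (xs x)[k x := y x])"
proof -
  have eq: "l[n := z] = (if n < length l then take n l @ z # drop (Suc n) l else l)" for l n z
    by (simp add: upd_conv_take_nth_drop list_update_beyond)
  show ?thesis unfolding eq by (intro computable_intros assms)
qed

lemma computable_nth_default [computable_intros]:
  assumes "computable d" "computable xs" "computable k"
  shows "computable (\<lambda>x. nth_default (d x) (xs x) (k x))"
proof -
  have eq: "nth_default a l n = (case drop n l of [] \<Rightarrow> a | y # ys \<Rightarrow> y)" for a l n
    by (auto simp: nth_default_def Cons_nth_drop_Suc[symmetric] split: list.split)
  have "computable (\<lambda>x. case drop (k x) (xs x) of [] \<Rightarrow> d x | y # ys \<Rightarrow> y)"
    by (intro computable_intros assms)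
  then show ?thesis by (simp add: eq)
qed

definition zip_step :: "('a \<times> 'b) list \<times> 'b list \<Rightarrow> 'a \<Rightarrow> ('a \<times> 'b) list \<times> 'b list" where
  "zip_step st x = (case snd st of [] \<Rightarrow> st | y # ys \<Rightarrow> ((x, y) # fst st, ys))"

lemma foldl_zip_step: "foldl zip_step (acc, ys) xs = (rev (zip xs ys) @ acc, drop (length xs) ys)"
proof (induction xs arbitrary: acc ys)
  case (Cons x xs)
  have "foldl zip_step (acc, []) l = (acc, [])" for l :: "'a list" by (induction l) (auto simp: zip_step_def)
  then show ?case using Cons.IH by (cases ys) (auto simp: zip_step_def)
qed simp

lemma computable_zip [computable_intros]:
  assumes "computable xs" "computable ys" shows "computable (\<lambda>x. zip (xs x) (ys x))"
proof -
  have "computable (\<lambda>x. rev (fst (foldl zip_step ([], ys x) (xs x))))"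
    unfolding zip_step_def[abs_def] by (intro computable_intros assms)
  then show ?thesis by (simp add: foldl_zip_step)
qed

lemma computable_n_lists [computable_intros]:
  assumes "computable n" "computable xs"
  shows "computable (\<lambda>x. List.n_lists (n x) (xs x))"
proof -
  have eq: "((\<lambda>L. concat (map (\<lambda>ys. map (\<lambda>y. y # ys) l) L)) ^^ k) [[]] = List.n_lists k l" for k l
    by (induction k) auto
  have "computable (\<lambda>x. ((\<lambda>L. concat (map (\<lambda>ys. map (\<lambda>y. y # ys) (xs x)) L)) ^^ n x) [[]])"
    by (intro computable_intros assms computable_comp[OF assms(2)])
  then show ?thesis by (simp add: eq)
qed

lemma computable_of_nat [computable_intros]:
  assumes "computable f" shows "computable (\<lambda>x. int (f x))"
proof -
  have "int_decode (n + n) = int n" for n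
    by (simp add: int_decode_def sum_decode_def)
  moreover have "computable (\<lambda>x. int_decode (f x + f x))" by (intro computable_intros assms)
  ultimately show ?thesis by simp
qed

definition int_code_pos :: "nat \<Rightarrow> nat" where
  "int_code_pos c = (if c div 2 + c div 2 = c then c div 2 else 0)"

definition int_code_neg :: "nat \<Rightarrow> nat" where
  "int_code_neg c = (if c div 2 + c div 2 = c then 0 else Suc c div 2)"

lemma int_decode_eq_pos_minus_neg: "int_decode c = int (int_code_pos c) - int (int_code_neg c)"
  by (auto simp: int_decode_def sum_decode_def int_code_pos_def int_code_neg_def) presburger+

lemma int_encode_of_nat_diff:
  "int_encode (int a - int b) = (if b \<le> a then (a - b) + (a - b) else (b - a) + (b - a) - 1)"
  by (auto simp: int_encode_def sum_encode_def nat_diff_distrib)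

text \<open>Integer addition and subtraction reduce to natural arithmetic on the positive and
  negative parts of the codes.\<close>

lemma computable_int_of_nat_diff:
  assumes "computable a" "computable b"
  shows "computable (\<lambda>x. int (a x) - int (b x))"
proof -
  have "computable (\<lambda>x. int_decode (if b x \<le> a x then (a x - b x) + (a x - b x) else (b x - a x) + (b x - a x) - 1))"
    by (intro computable_intros assms)
  then show ?thesis by (simp only: int_encode_of_nat_diff[symmetric] int_encode_inverse)
qed

lemma computable_int_add [computable_intros]:
  assumes f: "computable f" and g: "computable g"
  shows "computable (\<lambda>x. (f x :: int) + g x)"
proof -
  have "f x + g x = int (int_code_pos (enc (f x)) + int_code_pos (enc (g x)))
      - int (int_code_neg (enc (f x)) + int_code_neg (enc (g x)))" for x
    using int_decode_eq_pos_minus_neg[of "enc (f x)"] int_decode_eq_pos_minus_neg[of "enc (g x)"]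
    by (simp add: enc_int_def)
  moreover have "computable (\<lambda>x. int (int_code_pos (enc (f x)) + int_code_pos (enc (g x)))
      - int (int_code_neg (enc (f x)) + int_code_neg (enc (g x))))"
    unfolding int_code_pos_def int_code_neg_def by (intro computable_int_of_nat_diff computable_intros f g)
  ultimately show ?thesis by simp
qed

lemma computable_int_diff [computable_intros]:
  assumes f: "computable f" and g: "computable g"
  shows "computable (\<lambda>x. (f x :: int) - g x)"
proof -
  have "f x - g x = int (int_code_pos (enc (f x)) + int_code_neg (enc (g x)))
      - int (int_code_neg (enc (f x)) + int_code_pos (enc (g x)))" for x
    using int_decode_eq_pos_minus_neg[of "enc (f x)"] int_decode_eq_pos_minus_neg[of "enc (g x)"]
    by (simp add: enc_int_def)
  moreover have "computable (\<lambda>x. int (int_code_pos (enc (f x)) + int_code_neg (enc (g x)))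
      - int (int_code_neg (enc (f x)) + int_code_pos (enc (g x))))"
    unfolding int_code_pos_def int_code_neg_def by (intro computable_int_of_nat_diff computable_intros f g)
  ultimately show ?thesis by simp
qed

lemma computable_nat_abs [computable_intros]:
  assumes "computable f" shows "computable (\<lambda>x. nat \<bar>f x :: int\<bar>)"
proof -
  have "nat \<bar>i\<bar> = Suc (enc i) div 2" for i :: int
    by (auto simp: enc_int_def int_encode_def sum_encode_def)
  moreover have "computable (\<lambda>x. Suc (enc (f x)) div 2)" by (intro computable_intros assms)
  ultimately show ?thesis by simp
qed

lemma computable_even [computable_intros]:
  assumes "computable f" shows "computable (\<lambda>x. even (f x :: nat))"
proof -
  have "even n \<longleftrightarrow> n div 2 + n div 2 = n" for n :: nat by presburger
  moreover have "computable (\<lambda>x. f x div 2 + f x div 2 = f x)" by (intro computable_intros assms)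
  ultimately show ?thesis by simp
qed

lemma computable_power2 [computable_intros]:
  assumes "computable f" shows "computable (\<lambda>x. (2::nat) ^ f x)"
proof -
  have "((\<lambda>y. y + y) ^^ n) 1 = (2::nat) ^ n" for n by (induction n) auto
  moreover have "computable (\<lambda>x. ((\<lambda>y::nat. y + y) ^^ f x) 1)" by (intro computable_intros assms)
  ultimately show ?thesis by simp
qed

lemma upto_symmetric_eq_map_upt: "[- int R..int R] = map (\<lambda>n. int n - int R) [0..<R + R + 1]"
proof (rule sorted_distinct_set_unique)
  show "sorted (map (\<lambda>n. int n - int R) [0..<R + R + 1])"
    unfolding sorted_map by (rule sorted_wrt_mono_rel[OF _ sorted_upt]) auto
  show "distinct (map (\<lambda>n. int n - int R) [0..<R + R + 1])"
    by (auto simp: distinct_map inj_on_def)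
  have "z \<in> (\<lambda>n. int n - int R) ` {0..<R + R + 1}" if "- int R \<le> z" "z \<le> int R" for z
    using that by (intro image_eqI[of _ _ "nat (z + int R)"]) auto
  then show "set [- int R..int R] = set (map (\<lambda>n. int n - int R) [0..<R + R + 1])"
    by (auto simp del: upt_Suc)
qed auto

lemma computable_upto_symmetric [computable_intros]:
  assumes "computable f" shows "computable (\<lambda>x. [- int (f x)..int (f x)])"
  unfolding upto_symmetric_eq_map_upt by (intro computable_intros assms computable_comp[OF assms])

text \<open>A recursion \<open>f (Suc r) s = H s (map (f r) (M s))\<close> is evaluated bottom-up: first list the
  nodes of each level of the tree spanned by \<open>M\<close>, then evaluate the deepest level with \<open>B\<close> and
  repeatedly cut the list of values of one level into the chunks belonging to the nodes above.\<close>

definition tree_level :: "('s \<Rightarrow> 's list) \<Rightarrow> 's \<Rightarrow> nat \<Rightarrow> 's list" where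
  "tree_level M s j = ((\<lambda>L. concat (map M L)) ^^ j) [s]"

definition combine_level :: "('s \<Rightarrow> 'v list \<Rightarrow> 'v) \<Rightarrow> ('s \<Rightarrow> 's list) \<Rightarrow> 'v list \<Rightarrow> 's list \<Rightarrow> 'v list" where
  "combine_level H M vs L = fst (foldl (\<lambda>st s. (fst st @ [H s (take (length (M s)) (snd st))],
      drop (length (M s)) (snd st))) ([], vs) L)"

lemma combine_level_map_concat:
  "combine_level H M (map g (concat (map M L))) L = map (\<lambda>s. H s (map g (M s))) L"
proof -
  have "foldl (\<lambda>st s. (fst st @ [H s (take (length (M s)) (snd st))], drop (length (M s)) (snd st)))
      (out, map g (concat (map M L)) @ rest) L = (out @ map (\<lambda>s. H s (map g (M s))) L, rest)" for out rest
    by (induction L arbitrary: out) (simp_all add: take_map drop_map)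
  from this[of "[]" "[]"] show ?thesis by (simp add: combine_level_def)
qed

lemma tree_recursion_by_levels:
  assumes f0: "\<And>s. f 0 s = B s" and fS: "\<And>r s. f (Suc r) s = H s (map (f r) (M s))"
  shows "f r s = nth_default (B s)
    (foldl (combine_level H M) (map B (tree_level M s r)) (rev (map (tree_level M s) [0..<r]))) 0"
proof -
  have "foldl (combine_level H M) (map (f m) (tree_level M s k)) (rev (map (tree_level M s) [0..<k]))
      = map (f (m + k)) (tree_level M s 0)" for k m
  proof (induction k arbitrary: m)
    case (Suc k)
    have "combine_level H M (map (f m) (tree_level M s (Suc k))) (tree_level M s k) = map (f (Suc m)) (tree_level M s k)"
      using combine_level_map_concat[of H M "f m" "tree_level M s k"] by (simp add: tree_level_def fS map_concat)
    then show ?case using Suc.IH[of "Suc m"] by simp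
  qed simp
  from this[where k=r and m=0] have "foldl (combine_level H M) (map (f 0) (tree_level M s r))
      (rev (map (tree_level M s) [0..<r])) = [f r s]" by (simp add: tree_level_def[of M s 0])
  moreover have "f 0 = B" using f0 by auto
  ultimately show ?thesis by simp
qed

lemma computable_tree_recursion:
  fixes f :: "'e::encodable \<Rightarrow> nat \<Rightarrow> 's::encodable \<Rightarrow> 'v::encodable"
  assumes f0: "\<And>e s. f e 0 s = B e s" and fS: "\<And>e r s. f e (Suc r) s = H e s (map (f e r) (M e s))"
    and B: "computable (\<lambda>p. B (fst p) (snd p))" and M: "computable (\<lambda>p. M (fst p) (snd p))"
    and H: "computable (\<lambda>p. H (fst p) (fst (snd p)) (snd (snd p)))"
  shows "computable (\<lambda>p. f (fst p) (fst (snd p)) (snd (snd p)))"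
proof -
  have "computable (\<lambda>p. nth_default (B (fst p) (snd (snd p)))
      (foldl (combine_level (H (fst p)) (M (fst p))) (map (B (fst p)) (tree_level (M (fst p)) (snd (snd p)) (fst (snd p))))
        (rev (map (tree_level (M (fst p)) (snd (snd p))) [0..<fst (snd p)]))) 0)"
    unfolding combine_level_def tree_level_def
    by (intro computable_intros computable_app2[OF B] computable_app2[OF M] computable_app3[OF H])
  then show ?thesis by (subst tree_recursion_by_levels[of "f e" "B e" "H e" "M e" for e, OF f0 fS])
qed

section \<open>An executable model of the game\<close>

text \<open>A board is kept as an association list with the most recent tile first, and the
  instance \<open>(d, As, Fs, T)\<close> as a single tuple, the parameter of the tree recursion.\<close>

type_synonym board = "(point \<times> nat) list"
type_synonym game_instance = "nat \<times> nat list \<times> board list \<times> nat"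

definition vsub :: "point \<Rightarrow> point \<Rightarrow> point" where
  "vsub i j = map2 (-) i j"

definition l1norm :: "point \<Rightarrow> nat" where
  "l1norm v = sum_list (map (\<lambda>z. nat \<bar>z\<bar>) v)"

text \<open>If \<open>q\<close> appears in \<open>p\<close>, the first tile of \<open>q\<close> lands on a tile of \<open>p\<close>, which fixes the
  translation vector.\<close>

definition appears_impl :: "board \<Rightarrow> board \<Rightarrow> bool" where
  "appears_impl q p = (case q of [] \<Rightarrow> True
     | (j0, _) # _ \<Rightarrow> (\<exists>(i, _)\<in>set p. \<forall>(j, a)\<in>set q. (vadd (vsub i j0) j, a) \<in> set p))"

definition ended_impl :: "board list \<Rightarrow> board list \<Rightarrow> bool" where
  "ended_impl Fs bs \<longleftrightarrow> (\<exists>p\<in>set bs. \<exists>q\<in>set Fs. appears_impl q p)"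

definition tile_moves :: "nat \<Rightarrow> nat list \<Rightarrow> nat \<Rightarrow> board list \<Rightarrow> board list list" where
  "tile_moves d As R bs =
     [bs[k := (vadd j v, a) # nth_default [] bs k].
        k \<leftarrow> [0..<length bs], j \<leftarrow> map fst (nth_default [] bs k), v \<leftarrow> List.n_lists d [- int R..int R],
        l1norm v \<le> R \<and> vadd j v \<notin> set (map fst (nth_default [] bs k)), a \<leftarrow> As]"

definition moves_impl :: "nat \<Rightarrow> nat list \<Rightarrow> nat \<Rightarrow> nat \<Rightarrow> board list \<Rightarrow> board list list" where
  "moves_impl d As T t bs = bs # tile_moves d As (2 ^ (T - t)) bs @ map (\<lambda>a. bs @ [[(replicate d 0, a)]]) As"

fun win_impl :: "game_instance \<Rightarrow> nat \<Rightarrow> nat \<times> board list \<Rightarrow> bool" where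
  "win_impl (d, As, Fs, T) 0 (t, bs) = ended_impl Fs bs"
| "win_impl (d, As, Fs, T) (Suc r) (t, bs) =
     (ended_impl Fs bs \<or>
      (if odd t then (\<exists>b\<in>set (moves_impl d As T t bs). win_impl (d, As, Fs, T) r (Suc t, b))
       else (\<forall>b\<in>set (moves_impl d As T t bs). win_impl (d, As, Fs, T) r (Suc t, b))))"

lemma computable_win_impl: "computable (\<lambda>p. win_impl (fst p) (fst (snd p)) (snd (snd p)))"
proof (rule computable_tree_recursion[where
      B = "\<lambda>e s. ended_impl (fst (snd (snd e))) (snd s)" and
      M = "\<lambda>e s. map (Pair (Suc (fst s))) (moves_impl (fst e) (fst (snd e)) (snd (snd (snd e))) (fst s) (snd s))" and
      H = "\<lambda>e s vs. ended_impl (fst (snd (snd e))) (snd s) \<or>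
             (if odd (fst s) then \<exists>v\<in>set vs. v else \<forall>v\<in>set vs. v)"], goal_cases)
  case (1 e s)
  show ?case by (cases e; cases s) simp
next
  case (2 e r s)
  show ?case by (cases e; cases s) simp
qed (unfold ended_impl_def appears_impl_def moves_impl_def tile_moves_def vsub_def vadd_def l1norm_def,
    (intro computable_intros)+)

section \<open>Correctness of the executable model\<close>

lemma length_vadd [simp]: "length (vadd v j) = min (length v) (length j)"
  by (simp add: vadd_def)

lemma length_vsub [simp]: "length (vsub i j) = min (length i) (length j)"
  by (simp add: vsub_def)

lemma vadd_commute: "vadd v j = vadd j v"
  by (induction v j rule: list_induct2') (simp_all add: vadd_def)

lemma vsub_vadd: "length j = length v \<Longrightarrow> vsub (vadd j v) j = v"
  by (induction j v rule: list_induct2) (simp_all add: vadd_def vsub_def)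

lemma vadd_vsub: "length i = length j \<Longrightarrow> vadd j (vsub i j) = i"
  by (induction i j rule: list_induct2) (simp_all add: vadd_def vsub_def)

lemma l1dist_eq_l1norm_vsub: "length i = length j \<Longrightarrow> l1dist i j = int (l1norm (vsub i j))"
  by (induction i j rule: list_induct2) (simp_all add: l1dist_def l1norm_def vsub_def)

lemma appears_map_of_iff:
  assumes dp: "distinct (map fst p)" and dq: "distinct (map fst q)"
  shows "appears d (map_of q) (map_of p) \<longleftrightarrow> (\<exists>v. length v = d \<and> (\<forall>(j, a)\<in>set q. (vadd v j, a) \<in> set p))"
proof -
  have "(\<forall>j\<in>dom (map_of q). map_of p (vadd v j) = map_of q j) \<longleftrightarrow> (\<forall>(j, a)\<in>set q. (vadd v j, a) \<in> set p)" for v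
  proof
    assume h: "\<forall>j\<in>dom (map_of q). map_of p (vadd v j) = map_of q j"
    show "\<forall>(j, a)\<in>set q. (vadd v j, a) \<in> set p"
    proof (clarify)
      fix j a assume "(j, a) \<in> set q"
      then have "map_of q j = Some a" using map_of_eq_Some_iff[OF dq] by simp
      then show "(vadd v j, a) \<in> set p" using h map_of_eq_Some_iff[OF dp] by (metis domI)
    qed
  next
    assume h: "\<forall>(j, a)\<in>set q. (vadd v j, a) \<in> set p"
    show "\<forall>j\<in>dom (map_of q). map_of p (vadd v j) = map_of q j"
    proof
      fix j assume "j \<in> dom (map_of q)"
      then obtain a where a: "map_of q j = Some a" by auto
      then have "(vadd v j, a) \<in> set p" using h map_of_eq_Some_iff[OF dq] by auto
      then show "map_of p (vadd v j) = map_of q j" using a map_of_eq_Some_iff[OF dp] by simp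
    qed
  qed
  then show ?thesis unfolding appears_def by auto
qed

lemma appears_impl_iff:
  assumes "distinct (map fst p)" and "distinct (map fst q)"
    and "\<forall>(j, a)\<in>set q. length j = d" and "\<forall>(i, a)\<in>set p. length i = d"
  shows "appears d (map_of q) (map_of p) \<longleftrightarrow> appears_impl q p"
proof (cases q)
  case Nil
  then show ?thesis unfolding appears_map_of_iff[OF assms(1,2)]
    by (simp add: appears_impl_def) (metis length_replicate)
next
  case (Cons ja0 qs)
  obtain j0 a0 where ja0: "ja0 = (j0, a0)" by (cases ja0)
  have "length j0 = d" using assms(3) Cons ja0 by auto
  have impl: "appears_impl q p \<longleftrightarrow> (\<exists>(i, b)\<in>set p. \<forall>(j, a)\<in>set q. (vadd (vsub i j0) j, a) \<in> set p)"
    unfolding appears_impl_def Cons ja0 by simp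
  show ?thesis unfolding appears_map_of_iff[OF assms(1,2)] impl
  proof
    assume "\<exists>v. length v = d \<and> (\<forall>(j, a)\<in>set q. (vadd v j, a) \<in> set p)"
    then obtain v where v: "length v = d" "\<forall>(j, a)\<in>set q. (vadd v j, a) \<in> set p" by blast
    have "(vadd v j0, a0) \<in> set p" using v(2) Cons ja0 by simp
    moreover have "vsub (vadd v j0) j0 = v"
      using vsub_vadd[of j0 v] v(1) \<open>length j0 = d\<close> by (simp add: vadd_commute)
    ultimately show "\<exists>(i, b)\<in>set p. \<forall>(j, a)\<in>set q. (vadd (vsub i j0) j, a) \<in> set p"
      using v(2) by (intro bexI[of _ "(vadd v j0, a0)"]) simp_all
  next
    assume "\<exists>(i, b)\<in>set p. \<forall>(j, a)\<in>set q. (vadd (vsub i j0) j, a) \<in> set p"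
    then obtain i b where ib: "(i, b) \<in> set p" and h: "\<forall>(j, a)\<in>set q. (vadd (vsub i j0) j, a) \<in> set p"
      by blast
    have "length (vsub i j0) = d" using assms(4) ib \<open>length j0 = d\<close> by auto
    with h show "\<exists>v. length v = d \<and> (\<forall>(j, a)\<in>set q. (vadd v j, a) \<in> set p)" by blast
  qed
qed
definition wf_boards :: "nat \<Rightarrow> board list \<Rightarrow> bool" where
  "wf_boards d bs \<longleftrightarrow> (\<forall>p\<in>set bs. p \<noteq> [] \<and> distinct (map fst p) \<and> (\<forall>(i, a)\<in>set p. length i = d))"

lemma ended_impl_iff:
  assumes "wf_boards d bs" and "valid_instance d As Fs"
  shows "ended d (map_of ` set Fs) (map map_of bs) \<longleftrightarrow> ended_impl Fs bs"
proof -
  have "appears d (map_of q) (map_of p) \<longleftrightarrow> appears_impl q p" if "p \<in> set bs" "q \<in> set Fs" for p q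
    using that assms unfolding wf_boards_def valid_instance_def by (intro appears_impl_iff) fastforce+
  then show ?thesis unfolding ended_def ended_impl_def by auto
qed

lemma setdist_le_iff:
  assumes "finite D" and "D \<noteq> {}" and "\<forall>j\<in>D. length j = d"
  shows "length i = d \<and> setdist i D \<le> int R \<longleftrightarrow> (\<exists>j\<in>D. \<exists>v. length v = d \<and> l1norm v \<le> R \<and> i = vadd j v)"
proof
  assume i: "length i = d \<and> setdist i D \<le> int R"
  then obtain j where j: "j \<in> D" "l1dist i j \<le> int R"
    unfolding setdist_def using Min_le_iff[of "(\<lambda>j. l1dist i j) ` D" "int R"] assms(1,2) by auto
  have "length j = d" using assms(3) j(1) by auto
  then have "l1norm (vsub i j) \<le> R" "i = vadd j (vsub i j)" "length (vsub i j) = d"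
    using j(2) l1dist_eq_l1norm_vsub[of i j] vadd_vsub[of i j] i by auto
  then show "\<exists>j\<in>D. \<exists>v. length v = d \<and> l1norm v \<le> R \<and> i = vadd j v" using j(1) by blast
next
  assume "\<exists>j\<in>D. \<exists>v. length v = d \<and> l1norm v \<le> R \<and> i = vadd j v"
  then obtain j v where j: "j \<in> D" and v: "length v = d" "l1norm v \<le> R" "i = vadd j v" by blast
  have "length j = d" using assms(3) j by auto
  then have "length i = d" and "l1dist i j \<le> int R"
    using v l1dist_eq_l1norm_vsub[of i j] vsub_vadd[of j v] by auto
  then show "length i = d \<and> setdist i D \<le> int R"
    unfolding setdist_def using Min_le_iff[of "(\<lambda>j. l1dist i j) ` D" "int R"] assms(1,2) j by auto
qed

lemma mem_n_lists_box_iff: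
  "v \<in> set (List.n_lists d [- int R..int R]) \<and> l1norm v \<le> R \<longleftrightarrow> length v = d \<and> l1norm v \<le> R"
proof -
  have "- int R \<le> z \<and> z \<le> int R" if "l1norm v \<le> R" "z \<in> set v" for z
    using that member_le_sum_list[of "nat \<bar>z\<bar>" "map (\<lambda>z. nat \<bar>z\<bar>) v"] by (auto simp: l1norm_def)
  then show ?thesis by (auto simp: set_n_lists)
qed

lemma mem_tile_moves_iff:
  "x \<in> set (tile_moves d As R bs) \<longleftrightarrow> (\<exists>k j v a. k < length bs \<and> j \<in> fst ` set (bs ! k) \<and> length v = d \<and>
     l1norm v \<le> R \<and> vadd j v \<notin> fst ` set (bs ! k) \<and> a \<in> set As \<and> x = bs[k := (vadd j v, a) # bs ! k])"
  (is "_ \<longleftrightarrow> (\<exists>k j v a. ?move k j v a)")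
proof
  assume "x \<in> set (tile_moves d As R bs)"
  then obtain k jb v a where "k < length bs" "jb \<in> set (bs ! k)" "v \<in> set (List.n_lists d [- int R..int R])"
    "l1norm v \<le> R" "vadd (fst jb) v \<notin> fst ` set (bs ! k)" "a \<in> set As" "x = bs[k := (vadd (fst jb) v, a) # bs ! k]"
    by (auto simp: tile_moves_def nth_default_nth)
  then have "?move k (fst jb) v a" using mem_n_lists_box_iff by blast
  then show "\<exists>k j v a. ?move k j v a" by blast
next
  assume "\<exists>k j v a. ?move k j v a"
  then obtain k j v a where move: "?move k j v a" by blast
  then obtain b where "(j, b) \<in> set (bs ! k)" by auto
  have "v \<in> set (List.n_lists d [- int R..int R])" using move mem_n_lists_box_iff[of v d R] by simp
  then show "x \<in> set (tile_moves d As R bs)"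
    unfolding tile_moves_def using move \<open>(j, b) \<in> set (bs ! k)\<close>
    by (simp add: nth_default_nth)
      (intro bexI[of _ k] bexI[of _ "(j, b)"] bexI[of _ v] image_eqI[of _ _ a]; simp)
qed

lemma tile_target_iff:
  assumes "wf_boards d bs" and "k < length bs"
  shows "length i = d \<and> i \<notin> dom (map_of (bs ! k)) \<and> setdist i (dom (map_of (bs ! k))) \<le> int R \<longleftrightarrow>
    (\<exists>j v. j \<in> fst ` set (bs ! k) \<and> length v = d \<and> l1norm v \<le> R \<and> vadd j v \<notin> fst ` set (bs ! k) \<and> i = vadd j v)"
proof -
  define D where "D = fst ` set (bs ! k)"
  have "bs ! k \<in> set bs" using assms(2) by simp
  then have "finite D" "D \<noteq> {}" "\<forall>j\<in>D. length j = d"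
    using assms(1) unfolding wf_boards_def D_def by force+
  note near = setdist_le_iff[OF this, of i R]
  show ?thesis unfolding dom_map_of_conv_image_fst D_def[symmetric]
  proof
    assume i: "length i = d \<and> i \<notin> D \<and> setdist i D \<le> int R"
    then obtain j v where "j \<in> D" "length v = d" "l1norm v \<le> R" "i = vadd j v" using near by blast
    with i show "\<exists>j v. j \<in> D \<and> length v = d \<and> l1norm v \<le> R \<and> vadd j v \<notin> D \<and> i = vadd j v" by blast
  next
    assume "\<exists>j v. j \<in> D \<and> length v = d \<and> l1norm v \<le> R \<and> vadd j v \<notin> D \<and> i = vadd j v"
    then obtain j v where "j \<in> D" "length v = d" "l1norm v \<le> R" "vadd j v \<notin> D" "i = vadd j v" by blast
    moreover from this have "length i = d \<and> setdist i D \<le> int R" using near by blast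
    ultimately show "length i = d \<and> i \<notin> D \<and> setdist i D \<le> int R" by simp
  qed
qed

lemma tile_moves_correct:
  assumes "wf_boards d bs"
  shows "{(map map_of bs)[k := (map map_of bs ! k)(i \<mapsto> a)] | k i a. k < length (map map_of bs) \<and> length i = d
      \<and> i \<notin> dom (map map_of bs ! k) \<and> a \<in> set As \<and> setdist i (dom (map map_of bs ! k)) \<le> int R}
    = map map_of ` set (tile_moves d As R bs)"
proof -
  have upd: "map map_of (bs[k := (i, a) # bs ! k]) = (map map_of bs)[k := (map map_of bs ! k)(i \<mapsto> a)]"
    if "k < length bs" for k i a
    using that by (simp add: map_update)
  show ?thesis
  proof (intro set_eqI iffI)
    fix x assume "x \<in> {(map map_of bs)[k := (map map_of bs ! k)(i \<mapsto> a)] | k i a. k < length (map map_of bs)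
      \<and> length i = d \<and> i \<notin> dom (map map_of bs ! k) \<and> a \<in> set As \<and> setdist i (dom (map map_of bs ! k)) \<le> int R}"
    then obtain k i a where x: "x = (map map_of bs)[k := (map map_of bs ! k)(i \<mapsto> a)]"
      and k: "k < length (map map_of bs)" and a: "a \<in> set As"
      and "length i = d" "i \<notin> dom (map map_of bs ! k)" "setdist i (dom (map map_of bs ! k)) \<le> int R"
      by blast
    then have k: "k < length bs"
      and target: "length i = d \<and> i \<notin> dom (map_of (bs ! k)) \<and> setdist i (dom (map_of (bs ! k))) \<le> int R"
      by simp_all
    from target have "\<exists>j v. j \<in> fst ` set (bs ! k) \<and> length v = d \<and> l1norm v \<le> R \<and> vadd j v \<notin> fst ` set (bs ! k) \<and> i = vadd j v"
      by (rule tile_target_iff[OF assms k, THEN iffD1])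
    then obtain j v where "j \<in> fst ` set (bs ! k)" "length v = d" "l1norm v \<le> R" "vadd j v \<notin> fst ` set (bs ! k)"
      "i = vadd j v" by blast
    then have "bs[k := (i, a) # bs ! k] \<in> set (tile_moves d As R bs)"
      using k a unfolding mem_tile_moves_iff by blast
    then show "x \<in> map map_of ` set (tile_moves d As R bs)" unfolding x upd[OF k, symmetric] by (rule imageI)
  next
    fix x assume "x \<in> map map_of ` set (tile_moves d As R bs)"
    then obtain b where "b \<in> set (tile_moves d As R bs)" "x = map map_of b" by blast
    then obtain k j v a where k: "k < length bs" and a: "a \<in> set As" and x: "x = map map_of (bs[k := (vadd j v, a) # bs ! k])"
      and "j \<in> fst ` set (bs ! k)" "length v = d" "l1norm v \<le> R" "vadd j v \<notin> fst ` set (bs ! k)"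
      unfolding mem_tile_moves_iff by blast
    then have target: "length (vadd j v) = d \<and> vadd j v \<notin> dom (map_of (bs ! k)) \<and> setdist (vadd j v) (dom (map_of (bs ! k))) \<le> int R"
      by (subst tile_target_iff[OF assms k]) blast
    then show "x \<in> {(map map_of bs)[k := (map map_of bs ! k)(i \<mapsto> a)] | k i a. k < length (map map_of bs)
      \<and> length i = d \<and> i \<notin> dom (map map_of bs ! k) \<and> a \<in> set As \<and> setdist i (dom (map map_of bs ! k)) \<le> int R}"
      unfolding x upd[OF k] mem_Collect_eq using k a target
      by (intro exI[of _ k] exI[of _ "vadd j v"] exI[of _ a]) simp
  qed
qed

lemma moves_impl_correct:
  assumes "wf_boards d bs"
  shows "moves d (set As) T t (map map_of bs) = map map_of ` set (moves_impl d As T t bs)"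
proof -
  have "{bs'. \<exists>a. bs' = map map_of bs @ [[replicate d 0 \<mapsto> a]] \<and> a \<in> set As}
      = map map_of ` (\<lambda>a. bs @ [[(replicate d 0, a)]]) ` set As"
    by (auto simp: image_image)
  then show ?thesis
    using tile_moves_correct[OF assms, of As "2 ^ (T - t)"]
    unfolding moves_def moves_impl_def by (simp add: image_Un)
qed

lemma wf_boards_moves_impl:
  assumes "wf_boards d bs" and "b \<in> set (moves_impl d As T t bs)"
  shows "wf_boards d b"
proof -
  have "wf_boards d (bs[k := (vadd j v, a) # bs ! k])"
    if "k < length bs" "j \<in> fst ` set (bs ! k)" "length v = d" "vadd j v \<notin> fst ` set (bs ! k)" for k j v a
  proof -
    have "bs ! k \<in> set bs" using that(1) by simp
    then have "length j = d" using that(2) assms(1) unfolding wf_boards_def by fastforce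
    with \<open>bs ! k \<in> set bs\<close> have "(vadd j v, a) # bs ! k \<noteq> [] \<and> distinct (map fst ((vadd j v, a) # bs ! k))
        \<and> (\<forall>(i, a)\<in>set ((vadd j v, a) # bs ! k). length i = d)"
      using that assms(1) unfolding wf_boards_def by auto
    then show ?thesis using assms(1) set_update_subset_insert[of bs k] unfolding wf_boards_def by blast
  qed
  moreover have "wf_boards d (bs @ [[(replicate d 0, a)]])" for a
    using assms(1) unfolding wf_boards_def by auto
  moreover consider "b = bs" | "b \<in> set (tile_moves d As (2 ^ (T - t)) bs)" | a where "b = bs @ [[(replicate d 0, a)]]"
    using assms(2) unfolding moves_impl_def by auto
  ultimately show ?thesis using assms(1) unfolding mem_tile_moves_iff by metis
qed

lemma win_impl_correct:
  assumes "valid_instance d As Fs" and "wf_boards d bs"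
  shows "win d (set As) (map_of ` set Fs) T r t (map map_of bs) = win_impl (d, As, Fs, T) r (t, bs)"
  using assms(2)
proof (induction r arbitrary: t bs)
  case 0
  then show ?case by (simp add: ended_impl_iff[OF _ assms(1)])
next
  case (Suc r)
  have "win d (set As) (map_of ` set Fs) T r (Suc t) (map map_of b) = win_impl (d, As, Fs, T) r (Suc t, b)"
    if "b \<in> set (moves_impl d As T t bs)" for b
    using Suc.IH wf_boards_moves_impl[OF Suc.prems that] by blast
  then show ?case
    by (simp add: ended_impl_iff[OF Suc.prems assms(1)] moves_impl_correct[OF Suc.prems])
qed

lemma A_wins_iff_win_impl:
  assumes "valid_instance d As Fs"
  shows "A_wins d (set As) (map_of ` set Fs) T \<longleftrightarrow> win_impl (d, As, Fs, T) T (1, [])"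
  using win_impl_correct[OF assms, of "[]" T T 1] unfolding A_wins_def wf_boards_def by simp

section \<open>The decider\<close>

lemma enc_point: "enc (i :: point) = enc_point i"
  by (simp add: enc_list_def enc_point_def enc_int_def)

lemma enc_board: "enc (ps :: board) = enc_pattern ps"
proof -
  have "map enc ps = map (\<lambda>(i, a). prod_encode (enc_point i, a)) ps"
    by (rule map_cong) (auto simp: enc_Pair enc_point)
  then show ?thesis by (simp only: enc_list_def enc_pattern_def)
qed

lemma enc_nat_list: "enc (ns :: nat list) = list_encode ns"
  by (simp add: enc_list_def map_idI)

lemma enc_instance_eq_enc: "enc_instance d As Fs T = enc [d, enc As, enc Fs, T]"
proof -
  have "map enc Fs = map enc_pattern Fs" by (rule map_cong) (simp_all add: enc_board)
  then have "enc Fs = list_encode (map enc_pattern Fs)" by (simp only: enc_list_def)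
  then show ?thesis by (simp add: enc_instance_def enc_nat_list)
qed

definition decide_instance :: "nat list \<Rightarrow> nat" where
  "decide_instance l = (if win_impl (nth_default 0 l 0, inv enc (nth_default 0 l 1), inv enc (nth_default 0 l 2),
     nth_default 0 l 3) (nth_default 0 l 3) (1, []) then 1 else 0)"

lemma computable_decide_instance: "computable decide_instance"
proof -
  have "surj (enc :: nat list \<Rightarrow> nat)" "surj (enc :: board list \<Rightarrow> nat)"
    by (intro surj_enc_list surj_enc_prod surj_enc_int surj_enc_nat)+
  then show ?thesis unfolding decide_instance_def
    by (intro computable_intros computable_app3[OF computable_win_impl] computable_inv_enc)
qed

theorem lemma2:
  shows "\<exists>f. (\<forall>n. \<exists>y. evalr f [n] y) \<and>
           (\<forall>d As Fs T. valid_instance d As Fs \<longrightarrow>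
             (\<forall>y. evalr f [enc_instance d As Fs T] y \<longleftrightarrow>
                    y = (if A_wins d (set As) (map_of ` set Fs) T then 1 else 0)))"
proof -
  obtain F where "nat_computable F" and F: "\<And>l. F (enc l) = enc (decide_instance l)"
    using computable_decide_instance unfolding computable_def by blast
  then obtain r where "computes 1 r (\<lambda>xs. F (xs ! 0))" unfolding nat_computable_def by blast
  then have eval: "evalr r [n] (F n)" for n unfolding computes_def by (metis One_nat_def length_Cons list.size(3) nth_Cons_0)
  have "F (enc_instance d As Fs T) = (if A_wins d (set As) (map_of ` set Fs) T then 1 else 0)"
    if "valid_instance d As Fs" for d As Fs T
    using F[of "[d, enc As, enc Fs, T]"]
    by (simp add: enc_instance_eq_enc decide_instance_def nth_default_def numeral_eq_Suc
        inv_f_f[OF inj_enc] A_wins_iff_win_impl[OF that])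
  then show ?thesis using eval evalr_deterministic by metis
qed

end
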